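(* Let $m\in\mathbb{Z}_2$ with $v_2(m)$ odd, and $f(x)=x^2+(-1-4m)x$ on $\mathbb{Z}_2$. Then $f$ has the two fixed points $0$ and $4m+2$, $f(1+2\mathbb{Z}_2)\subset 2\mathbb{Z}_2$, and $$2\mathbb{Z}_2=\{0,4m+2\}\sqcup E_1\sqcup E_2\sqcup E_3,$$ where $$E_1=\bigsqcup_{n\ge4}\big(4m+2+2^{n-2}+2^{n-1}\mathbb{Z}_2\big)-\{\text{II-}[1]\},$$ $$E_2=\bigsqcup_{4\le n\le\lfloor v_2(m)/2\rfloor+3}\big(2^{n-2}+2^{n-1}\mathbb{Z}_2\big)-\{\text{II-}[2n-5]\},$$ $$E_3=\bigsqcup_{n>\lfloor v_2(m)/2\rfloor+3}\big(2^{n-2}+2^{n-1}\mathbb{Z}_2\big)-\{\text{II-}[v_2(m)+1]\}.$$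
   Context: $v_2$ is the $2$-adic valuation. For $n\ge1$, $f_n$ is the induced map on $\mathbb{Z}/2^n\mathbb{Z}$, $f_n(x\bmod 2^n)=f(x)\bmod 2^n$. A cycle of $f_n$ (at level $n$) of length $k$ is a tuple $\sigma=(x_1,\dots,x_k)$ of distinct elements with $f_n(x_i)=x_{i+1}$, $f_n(x_k)=x_1$. The set $X_\sigma=\{y\in\mathbb{Z}/2^{n+1}\mathbb{Z}:y\bmod 2^n\in\sigma\}$ is $f_{n+1}$-invariant; its cycles are the lifts of $\sigma$. $\sigma$ grows if $X_\sigma$ is a single cycle of length $2k$ and splits if it is a union of two cycles of length $k$. For $k\ge0$, "$\sigma$ splits $k$ times and then its lifts grow forever" means every cycle at levels $n,\dots,n+k-1$ lying above $\sigma$ (reducing mod $2^n$ into $\sigma$) splits, and every cycle at every level $\ge n+k$ lying above $\sigma$ grows. A set $F=(x+2^n\mathbb{Z}_2)\cup(y+2^n\mathbb{Z}_2)$ with $(x\bmod 2^n,y\bmod 2^n)$ a 2-cycle of $f_n$ is of type II-$[k]$ if this 2-cycle splits $k$ times and then its lifts grow forever (then $F$ is the disjoint union of $2^k$ clopen invariant sets, each a union of two balls of radius $2^{-n-k}$, on each of which $f$ is minimal). The notation $E=\bigsqcup_{n\in J}F_n-\{\text{II-}[k]\}$ means $E$ is the disjoint union of the sets $F_n$, each of type II-$[k]$ (with $k$ possibly depending on $n$ as indicated). *)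

theory Defs
  imports Main
begin

typedef z2 = "{a :: nat \<Rightarrow> int. \<forall>n. 0 \<le> a n \<and> a n < 2 ^ n \<and> a (Suc n) mod 2 ^ n = a n}"
  by (rule exI[of _ "\<lambda>_. 0"]) simp

definition res :: "nat \<Rightarrow> z2 \<Rightarrow> int" where
  "res n x = Rep_z2 x n"

definition z2 :: "int \<Rightarrow> z2" where
  "z2 k = Abs_z2 (\<lambda>n. k mod 2 ^ n)"

instantiation z2 :: "{zero, one, plus, minus, uminus, times}"
begin
definition "0 = z2 0"
definition "1 = z2 1"
definition "x + y = Abs_z2 (\<lambda>n. (res n x + res n y) mod 2 ^ n)"
definition "x - y = Abs_z2 (\<lambda>n. (res n x - res n y) mod 2 ^ n)"
definition "- x = Abs_z2 (\<lambda>n. (- res n x) mod 2 ^ n)"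
definition "x * y = Abs_z2 (\<lambda>n. (res n x * res n y) mod 2 ^ n)"
instance ..
end

text \<open>2-adic valuation (for nonzero x): v_2(x) = k iff 2^k divides x but 2^(k+1) does not.\<close>
definition v2 :: "z2 \<Rightarrow> nat" where
  "v2 x = (LEAST k. res (Suc k) x \<noteq> 0)"

definition zball :: "z2 \<Rightarrow> nat \<Rightarrow> z2 set" where
  "zball a n = {y. res n y = res n a}"

text \<open>f_n on Z/2^n Z (residues represented by integers in [0,2^n)).\<close>
definition ind :: "(z2 \<Rightarrow> z2) \<Rightarrow> nat \<Rightarrow> int \<Rightarrow> int" where
  "ind f n r = res n (f (z2 r))"

definition is_cycle :: "(z2 \<Rightarrow> z2) \<Rightarrow> nat \<Rightarrow> int list \<Rightarrow> bool" where
  "is_cycle f n xs \<longleftrightarrow> xs \<noteq> [] \<and> distinct xs \<and> set xs \<subseteq> {0..<2 ^ n} \<and>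
     (\<forall>i<length xs. ind f n (xs ! i) = xs ! (Suc i mod length xs))"

definition liftset :: "nat \<Rightarrow> int list \<Rightarrow> int set" where
  "liftset n xs = {y. 0 \<le> y \<and> y < 2 ^ Suc n \<and> y mod 2 ^ n \<in> set xs}"

definition grows :: "(z2 \<Rightarrow> z2) \<Rightarrow> nat \<Rightarrow> int list \<Rightarrow> bool" where
  "grows f n xs \<longleftrightarrow> (\<exists>t. is_cycle f (Suc n) t \<and> length t = 2 * length xs \<and> set t = liftset n xs)"

definition splits :: "(z2 \<Rightarrow> z2) \<Rightarrow> nat \<Rightarrow> int list \<Rightarrow> bool" where
  "splits f n xs \<longleftrightarrow> (\<exists>t1 t2. is_cycle f (Suc n) t1 \<and> is_cycle f (Suc n) t2 \<and>
      length t1 = length xs \<and> length t2 = length xs \<and>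
      set t1 \<inter> set t2 = {} \<and> set t1 \<union> set t2 = liftset n xs)"

definition above :: "nat \<Rightarrow> int list \<Rightarrow> nat \<Rightarrow> int list \<Rightarrow> bool" where
  "above n xs l t \<longleftrightarrow> n \<le> l \<and> (\<forall>y\<in>set t. y mod 2 ^ n \<in> set xs)"

definition splits_then_grows :: "(z2 \<Rightarrow> z2) \<Rightarrow> nat \<Rightarrow> int list \<Rightarrow> nat \<Rightarrow> bool" where
  "splits_then_grows f n xs k \<longleftrightarrow>
     (\<forall>l t. n \<le> l \<and> l < n + k \<and> is_cycle f l t \<and> above n xs l t \<longrightarrow> splits f l t) \<and>
     (\<forall>l t. n + k \<le> l \<and> is_cycle f l t \<and> above n xs l t \<longrightarrow> grows f l t)"

definition typeII :: "(z2 \<Rightarrow> z2) \<Rightarrow> z2 set \<Rightarrow> nat \<Rightarrow> bool" where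
  "typeII f F k \<longleftrightarrow> (\<exists>N x y. 1 \<le> N \<and> F = zball x N \<union> zball y N \<and>
      is_cycle f N [res N x, res N y] \<and> splits_then_grows f N [res N x, res N y] k)"

end

theory Submission
  imports Defs "HOL-Computational_Algebra.Primes"
begin

text \<open>Modulo 2^l the map f agrees with the integer polynomial g(x) = x^2 - (1 + 4M) x for any
  integer M congruent to m modulo 2^l. At even points g' is -1 modulo 4, so iterates of g
  preserve exact 2-adic distances of size at least 4. Consequently, if v(g^2 r - r) = e on a
  ball on which f swaps two halves, then v(g^(2^(i+1)) r - r) = e + i, and the 2-cycle formed by
  the halves splits at every level below e and grows from level e on. The balls of the
  decomposition are the shells around the fixed points 4m + 2 and 0; on the shell
  v(r - 4m - 2) = k one finds v(g^2 r - r) = k + 3, and on the shell v(r) = k the factorisation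
  g^2 r - r = (g r - r)(r^2 - 4m(r + 1)) gives v(g^2 r - r) = k + 1 + min(2k, v(m) + 2), the two
  terms having distinct valuations because v(m) is odd.\<close>

section \<open>Residues of 2-adic integers\<close>

lemma res_nonneg [simp]: "0 \<le> res n x"
  and res_less [simp]: "res n x < 2 ^ n"
  and res_Suc_mod: "res (Suc n) x mod 2 ^ n = res n x"
  using Rep_z2[of x] by (auto simp: res_def)

lemma mod_pow2_mod_le: "k \<le> n \<Longrightarrow> (a::int) mod 2 ^ n mod 2 ^ k = a mod 2 ^ k"
  by (simp add: mod_mod_cancel le_imp_power_dvd)

lemma mod_pow2_eq_le: "k \<le> n \<Longrightarrow> (a::int) mod 2 ^ n = b mod 2 ^ n \<Longrightarrow> a mod 2 ^ k = b mod 2 ^ k"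
  by (metis mod_pow2_mod_le)

lemma res_mod [simp]: "res n x mod 2 ^ n = res n x"
  by simp

lemma res_mod_le: "n \<le> k \<Longrightarrow> res k x mod 2 ^ n = res n x"
proof (induction k rule: dec_induct)
  case (step k)
  have "(2::int) ^ n dvd 2 ^ k" using step.hyps(1) by (rule le_imp_power_dvd)
  then have "res (Suc k) x mod 2 ^ n = res (Suc k) x mod 2 ^ k mod 2 ^ n"
    by (simp add: mod_mod_cancel)
  with step.IH show ?case by (simp add: res_Suc_mod)
qed simp

lemma z2_eq_iff: "x = y \<longleftrightarrow> (\<forall>n. res n x = res n y)"
  by (metis Rep_z2_inject ext res_def)

lemma res_Abs_z2:
  assumes "\<And>n. s (Suc n) mod 2 ^ n = s n mod (2::int) ^ n"
  shows "res n (Abs_z2 (\<lambda>n. s n mod 2 ^ n)) = s n mod 2 ^ n"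
proof -
  have "s (Suc n) mod 2 ^ Suc n mod 2 ^ n = s n mod 2 ^ n" for n
    using assms le_imp_power_dvd[of n "Suc n" "2::int"] by (simp add: mod_mod_cancel)
  then show ?thesis by (simp add: res_def Abs_z2_inverse)
qed

lemma res_z2: "res n (z2 k) = k mod 2 ^ n"
  unfolding z2_def by (rule res_Abs_z2) simp

lemma res_add: "res n (x + y) = (res n x + res n y) mod 2 ^ n"
  unfolding plus_z2_def by (rule res_Abs_z2) (metis mod_add_eq res_Suc_mod)

lemma res_diff: "res n (x - y) = (res n x - res n y) mod 2 ^ n"
  unfolding minus_z2_def by (rule res_Abs_z2) (metis mod_diff_eq res_Suc_mod)

lemma res_mult: "res n (x * y) = (res n x * res n y) mod 2 ^ n"
  unfolding times_z2_def by (rule res_Abs_z2) (metis mod_mult_eq res_Suc_mod)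

lemma res_zero [simp]: "res n 0 = 0"
  unfolding zero_z2_def res_z2 by simp

lemma res_0 [simp]: "res 0 x = 0"
  using res_less[of 0 x] res_nonneg[of 0 x] unfolding power_0 by linarith

lemma z2_diff_eq_0_iff: fixes x y :: z2 shows "x - y = 0 \<longleftrightarrow> x = y"
proof -
  have "res n x = res n y" if "(res n x - res n y) mod 2 ^ n = 0" for n
    using that by (metis mod_eq_dvd_iff dvd_eq_mod_eq_0 mod_pos_pos_trivial res_less res_nonneg)
  then show ?thesis by (auto simp: z2_eq_iff res_diff)
qed

lemma z2_add_0_left: "0 + x = (x :: z2)"
  by (simp add: z2_eq_iff res_add)

lemma z2_diff_0_right: "x - 0 = (x :: z2)"
  by (simp add: z2_eq_iff res_diff)

lemma res_eq_0_if_le_v2: "j \<le> v2 x \<Longrightarrow> res j x = 0"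
proof (cases "x = 0")
  case False
  assume "j \<le> v2 x"
  show ?thesis
  proof (cases j)
    case (Suc i)
    with \<open>j \<le> v2 x\<close> have "i < (LEAST k. res (Suc k) x \<noteq> 0)" by (simp add: v2_def)
    then show ?thesis using not_less_Least Suc by blast
  qed simp
qed simp

lemma res_Suc_v2_neq_0: "x \<noteq> 0 \<Longrightarrow> res (Suc (v2 x)) x \<noteq> 0"
  unfolding v2_def by (rule LeastI_ex) (metis not0_implies_Suc res_0 res_zero z2_eq_iff)

lemma res_Suc_v2: "x \<noteq> 0 \<Longrightarrow> res (Suc (v2 x)) x = 2 ^ v2 x"
proof -
  assume "x \<noteq> 0"
  define k where "k = v2 x"
  have "res (Suc k) x mod 2 ^ k = 0"
    using res_eq_0_if_le_v2[of k x] unfolding k_def by (simp add: res_Suc_mod)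
  then obtain c where c: "res (Suc k) x = 2 ^ k * c" by auto
  have "0 < c" using c res_Suc_v2_neq_0[OF \<open>x \<noteq> 0\<close>] res_nonneg[of "Suc k" x]
    unfolding k_def by (smt (verit) zero_less_mult_iff zero_less_power)
  moreover have "c < 2" using c res_less[of "Suc k" x] by (simp add: mult.commute)
  ultimately show ?thesis using c k_def by simp
qed

lemma res_Suc_eq_pow2_iff: "res (Suc k) x = 2 ^ k \<longleftrightarrow> x \<noteq> 0 \<and> v2 x = k"
proof
  assume k: "res (Suc k) x = 2 ^ k"
  then have "x \<noteq> 0" by auto
  moreover have "v2 x = k" unfolding v2_def
  proof (rule Least_equality)
    fix j assume j: "res (Suc j) x \<noteq> 0"
    show "k \<le> j"
    proof (rule ccontr)
      assume "\<not> k \<le> j"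
      then have "res (Suc j) x = 2 ^ k mod 2 ^ Suc j"
        using res_mod_le[of "Suc j" "Suc k" x] k by simp
      also have "\<dots> = 0"
        using \<open>\<not> k \<le> j\<close> le_imp_power_dvd[of "Suc j" k "2::int"] by simp
      finally show False using j by simp
    qed
  qed (use k in simp)
  ultimately show "x \<noteq> 0 \<and> v2 x = k" ..
qed (use res_Suc_v2 in blast)

lemma zball_res: "y \<in> zball a n \<Longrightarrow> j \<le> n \<Longrightarrow> res j y = res j a"
  unfolding zball_def using res_mod_le[of j n y] res_mod_le[of j n a] by simp

lemma mod_eq_iff_mod_double:
  fixes x a q :: int
  shows "x mod q = a mod q \<longleftrightarrow>
    x mod (2 * q) = a mod (2 * q) \<or> x mod (2 * q) = (a + q) mod (2 * q)"
proof
  assume "x mod q = a mod q"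
  then obtain c where c: "x - a = q * c" by (metis dvd_def mod_eq_dvd_iff)
  show "x mod (2 * q) = a mod (2 * q) \<or> x mod (2 * q) = (a + q) mod (2 * q)"
  proof (cases "even c")
    case True
    then obtain d where "c = 2 * d" by blast
    with c have "x - a = (2 * q) * d" by simp
    then show ?thesis by (metis dvd_triv_left mod_eq_dvd_iff)
  next
    case False
    then obtain d where "c = 2 * d + 1" using oddE by blast
    with c have "x - (a + q) = (2 * q) * d" by (simp add: algebra_simps)
    then show ?thesis by (metis dvd_triv_left mod_eq_dvd_iff)
  qed
next
  have "y mod (2 * q) mod q = y mod q" for y :: int by (simp add: mod_mod_cancel)
  then show "x mod (2 * q) = a mod (2 * q) \<or> x mod (2 * q) = (a + q) mod (2 * q) \<Longrightarrow>
      x mod q = a mod q"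
    by (metis mod_add_self2)
qed

lemma zball_split: "zball a k = zball a (Suc k) \<union> zball (a + z2 (2 ^ k)) (Suc k)"
proof -
  have "res k y = res k a \<longleftrightarrow>
      res (Suc k) y = res (Suc k) a \<or> res (Suc k) y = (res (Suc k) a + 2 ^ k) mod 2 ^ Suc k" for y
    using mod_eq_iff_mod_double[of "res (Suc k) y" "2 ^ k" "res (Suc k) a"]
    unfolding power_Suc[symmetric] by (simp add: res_Suc_mod del: power_Suc)
  then show ?thesis by (auto simp: zball_def res_add res_z2 mod_simps)
qed

lemma mem_zball_shift_iff: "y \<in> zball (a + z2 (2 ^ k)) (Suc k) \<longleftrightarrow> y \<noteq> a \<and> v2 (y - a) = k"
proof -
  have "y \<in> zball (a + z2 (2 ^ k)) (Suc k) \<longleftrightarrow>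
      res (Suc k) y mod 2 ^ Suc k = (res (Suc k) a + 2 ^ k) mod 2 ^ Suc k"
    by (simp add: zball_def res_add res_z2 mod_simps del: power_Suc)
  also have "\<dots> \<longleftrightarrow> (res (Suc k) y - res (Suc k) a) mod 2 ^ Suc k = 2 ^ k mod 2 ^ Suc k"
    unfolding mod_eq_dvd_iff by (simp add: algebra_simps)
  also have "\<dots> \<longleftrightarrow> res (Suc k) (y - a) = 2 ^ k"
    by (simp add: res_diff)
  finally show ?thesis by (simp add: res_Suc_eq_pow2_iff z2_diff_eq_0_iff)
qed

section \<open>Exact powers of two in the integers\<close>

definition exact_pow2 :: "nat \<Rightarrow> int \<Rightarrow> bool" where
  "exact_pow2 a z \<longleftrightarrow> (\<exists>u. odd u \<and> z = 2 ^ a * u)"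

lemma exact_pow2_iff: "exact_pow2 a z \<longleftrightarrow> 2 ^ a dvd z \<and> \<not> 2 ^ Suc a dvd z"
proof
  assume "exact_pow2 a z"
  then obtain u where "odd u" "z = 2 ^ a * u" by (auto simp: exact_pow2_def)
  then show "2 ^ a dvd z \<and> \<not> 2 ^ Suc a dvd z" by simp
next
  assume z: "2 ^ a dvd z \<and> \<not> 2 ^ Suc a dvd z"
  then obtain u where u: "z = 2 ^ a * u" by blast
  with z have "odd u" by auto
  with u show "exact_pow2 a z" by (auto simp: exact_pow2_def)
qed

lemma exact_pow2_dvd: "exact_pow2 a z \<Longrightarrow> 2 ^ b dvd z \<longleftrightarrow> b \<le> a"
proof
  assume "exact_pow2 a z" "2 ^ b dvd z"
  show "b \<le> a"
  proof (rule ccontr)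
    assume "\<not> b \<le> a"
    then have "(2::int) ^ Suc a dvd 2 ^ b" using le_imp_power_dvd[of "Suc a" b "2::int"] by simp
    with \<open>2 ^ b dvd z\<close> \<open>exact_pow2 a z\<close> show False by (meson dvd_trans exact_pow2_iff)
  qed
qed (meson dvd_trans exact_pow2_iff le_imp_power_dvd)

lemma exact_pow2_power: "exact_pow2 a (2 ^ a)"
  by (auto simp: exact_pow2_def intro: exI[of _ 1])

lemma exact_pow2_0: "exact_pow2 0 z \<longleftrightarrow> odd z"
  by (simp add: exact_pow2_def)

lemma exact_pow2_mult: "exact_pow2 a x \<Longrightarrow> exact_pow2 b y \<Longrightarrow> exact_pow2 (a + b) (x * y)"
  unfolding exact_pow2_def by (auto simp: power_add algebra_simps)

lemma exact_pow2_add: "exact_pow2 a x \<Longrightarrow> 2 ^ Suc a dvd y \<Longrightarrow> exact_pow2 a (x + y)"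
  unfolding exact_pow2_iff by (metis dvd_add_left_iff dvd_add_right_iff dvd_mult_right power_Suc)

lemma exact_pow2_add_less: "exact_pow2 a x \<Longrightarrow> exact_pow2 b y \<Longrightarrow> a < b \<Longrightarrow> exact_pow2 a (x + y)"
  by (meson Suc_leI exact_pow2_add exact_pow2_dvd)

lemma exact_pow2_uminus: "exact_pow2 a (- z) \<longleftrightarrow> exact_pow2 a z"
  by (simp add: exact_pow2_iff)

lemma exact_pow2_of_mod: "z mod 2 ^ Suc a = 2 ^ a \<Longrightarrow> exact_pow2 a z"
proof -
  assume "z mod 2 ^ Suc a = 2 ^ a"
  then have "z = 2 ^ a * (2 * (z div 2 ^ Suc a) + 1)"
    using div_mult_mod_eq[of z "2 ^ Suc a"] by (simp add: algebra_simps)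
  then show ?thesis unfolding exact_pow2_def by (intro exI[of _ "2 * (z div 2 ^ Suc a) + 1"]) simp
qed

lemma exact_pow2_mod_neq: "exact_pow2 a (z - y) \<Longrightarrow> a < b \<Longrightarrow> z mod 2 ^ b \<noteq> y mod 2 ^ b"
  by (simp add: mod_eq_dvd_iff exact_pow2_dvd)

lemma exact_pow2_mod_Suc:
  assumes "exact_pow2 a (z - y)"
  shows "z mod 2 ^ Suc a = (y + 2 ^ a) mod 2 ^ Suc a"
proof -
  obtain w where "z - y = 2 ^ a * (2 * w + 1)"
    using assms by (auto simp: exact_pow2_def elim: oddE)
  then have "z - (y + 2 ^ a) = 2 ^ Suc a * w" by (simp add: algebra_simps)
  then have "2 ^ Suc a dvd z - (y + 2 ^ a)" by (metis dvd_triv_left)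
  then show ?thesis using mod_eq_dvd_iff by blast
qed


lemma exact_pow2_add_min:
  "exact_pow2 a x \<Longrightarrow> exact_pow2 b y \<Longrightarrow> a \<noteq> b \<Longrightarrow> exact_pow2 (min a b) (x + y)"
proof (cases "a < b")
  case False
  assume "exact_pow2 a x" "exact_pow2 b y" "a \<noteq> b"
  with False have "exact_pow2 b (y + x)" using exact_pow2_add_less by simp
  with False show ?thesis by (simp add: add.commute)
qed (simp add: exact_pow2_add_less)

lemma exact_pow2_of_res:
  assumes "x \<noteq> 0" "v2 x < n" "Z mod 2 ^ n = res n x"
  shows "exact_pow2 (v2 x) Z"
proof (rule exact_pow2_of_mod)
  have "Z mod 2 ^ Suc (v2 x) = res n x mod 2 ^ Suc (v2 x)"
    using assms(2,3) mod_pow2_mod_le[of "Suc (v2 x)" n Z] by simp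
  also have "\<dots> = 2 ^ v2 x" using assms(1,2) res_mod_le[of "Suc (v2 x)" n x] res_Suc_v2 by simp
  finally show "Z mod 2 ^ Suc (v2 x) = 2 ^ v2 x" .
qed

lemma exact_pow2_res: "x \<noteq> 0 \<Longrightarrow> v2 x < n \<Longrightarrow> exact_pow2 (v2 x) (res n x)"
  using exact_pow2_of_res[of x n "res n x"] res_mod[of n x] by blast

section \<open>The integer model of the map\<close>

definition qmap :: "int \<Rightarrow> int \<Rightarrow> int" where
  "qmap M x = x * x - (1 + 4 * M) * x"

lemma qmap_cong: "x mod q = y mod q \<Longrightarrow> qmap M x mod q = qmap M y mod q"
  unfolding qmap_def by (intro mod_diff_cong mod_mult_cong refl)

lemma even_qmap_iter: "even x \<Longrightarrow> even ((qmap M ^^ i) x)"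
  by (induction i) (simp_all add: qmap_def)

text \<open>At even points the derivative 2x - 1 - 4M of qmap is 3 mod 4, so qmap multiplies
  differences divisible by 4 by a unit that is 3 mod 4.\<close>

lemma qmap_diff:
  assumes "even x" "4 dvd h"
  shows "\<exists>u. qmap M (x + h) - qmap M x = h * u \<and> u mod 4 = 3"
proof -
  obtain a b where "x = 2 * a" "h = 4 * b" using assms by (metis dvdE evenE)
  then have "2 * x + h - 1 - 4 * M = 3 + (a + b - M - 1) * 4" by simp
  then have "(2 * x + h - 1 - 4 * M) mod 4 = 3" by (simp only: mod_mult_self1) simp
  moreover have "qmap M (x + h) - qmap M x = h * (2 * x + h - 1 - 4 * M)"
    unfolding qmap_def by (simp add: algebra_simps)
  ultimately show ?thesis by blast
qed

lemma qmap_iter_diff: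
  assumes "even x" "4 dvd h"
  shows "\<exists>U. (qmap M ^^ L) (x + h) - (qmap M ^^ L) x = h * U \<and> U mod 4 = (if even L then 1 else 3)"
proof (induction L)
  case (Suc L)
  then obtain U where U: "(qmap M ^^ L) (x + h) - (qmap M ^^ L) x = h * U"
    and U4: "U mod 4 = (if even L then 1 else 3)" by blast
  define y where "y = (qmap M ^^ L) x"
  have "even y" unfolding y_def using assms(1) by (rule even_qmap_iter)
  moreover have "4 dvd h * U" using assms(2) by simp
  ultimately obtain u where u: "qmap M (y + h * U) - qmap M y = h * U * u" and u4: "u mod 4 = 3"
    using qmap_diff by blast
  have "(qmap M ^^ Suc L) (x + h) - (qmap M ^^ Suc L) x = h * (U * u)"
    using U u unfolding y_def by (simp add: algebra_simps)
  moreover have "(U * u) mod 4 = (if even (Suc L) then 1 else 3)"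
    using U4 u4 mod_mult_eq[of U 4 u] by auto
  ultimately show ?case by blast
qed (auto intro: exI[of _ 1])

lemma exact_pow2_qmap_iter_diff:
  assumes "even x" "2 \<le> l" "exact_pow2 l h"
  shows "exact_pow2 l ((qmap M ^^ L) (x + h) - (qmap M ^^ L) x)"
proof -
  have "4 dvd h" using exact_pow2_dvd[OF assms(3), of 2] assms(2) by simp
  then obtain U where U: "(qmap M ^^ L) (x + h) - (qmap M ^^ L) x = h * U"
    and U4: "U mod 4 = (if even L then 1 else 3)"
    using qmap_iter_diff[OF assms(1)] by blast
  have "odd U" using U4 mod_mod_cancel[of 2 4 U] by (auto simp: odd_iff_mod_2_eq_one split: if_splits)
  then show ?thesis using U exact_pow2_mult[OF assms(3), of 0 U] by (simp add: exact_pow2_0)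
qed

text \<open>If the orbit of x returns to within 2^l after an even number L of steps, then it
  returns to within exactly 2^(l+1) after 2L steps: the second lap adds the same
  displacement again, up to a factor that is 1 mod 4.\<close>

lemma exact_pow2_qmap_iter_double:
  assumes "even x" "even L" "2 \<le> l" "exact_pow2 l ((qmap M ^^ L) x - x)"
  shows "exact_pow2 (Suc l) ((qmap M ^^ (2 * L)) x - x)"
proof -
  define h where "h = (qmap M ^^ L) x - x"
  have "4 dvd h" using exact_pow2_dvd[OF assms(4), of 2] assms(3) by (simp add: h_def)
  then obtain U where U: "(qmap M ^^ L) (x + h) - (qmap M ^^ L) x = h * U" and "U mod 4 = 1"
    using qmap_iter_diff[OF assms(1)] assms(2) by fastforce
  then have "U + 1 = 2 * (2 * (U div 4) + 1)" by presburger
  then have exU: "exact_pow2 1 (U + 1)"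
    unfolding exact_pow2_def by (intro exI[of _ "2 * (U div 4) + 1"]) simp
  have "(qmap M ^^ (2 * L)) x = (qmap M ^^ L) (x + h)"
    by (simp add: h_def mult_2 funpow_add)
  then have "(qmap M ^^ (2 * L)) x - x = ((qmap M ^^ L) (x + h) - (qmap M ^^ L) x) + h"
    by (simp add: h_def)
  also have "\<dots> = h * (U + 1)" using U by (simp add: algebra_simps)
  finally have "(qmap M ^^ (2 * L)) x - x = h * (U + 1)" .
  then show ?thesis using exact_pow2_mult[OF assms(4)[folded h_def] exU] by simp
qed

lemma exact_pow2_qmap_iter_pow2:
  assumes "even x" "2 \<le> e" "exact_pow2 e ((qmap M ^^ 2) x - x)"
  shows "exact_pow2 (e + i) ((qmap M ^^ 2 ^ Suc i) x - x)"
proof (induction i)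
  case (Suc i)
  then show ?case using exact_pow2_qmap_iter_double[OF assms(1) _ _ Suc] assms(2) by simp
qed (simp add: assms(3))

lemma qmap_minus_id: "qmap M x - x = x * (x - (4 * M + 2))"
  by (simp add: qmap_def algebra_simps)

lemma qmap_twice_minus_id: "(qmap M ^^ 2) x - x = (qmap M x - x) * (x * x - 4 * M * (x + 1))"
  by (simp add: qmap_def numeral_2_eq_2 algebra_simps)

lemma exact_pow2_qmap_near_4M2:
  assumes "even M" "2 \<le> k" and r: "exact_pow2 k (r - (4 * M + 2))"
  shows "even r \<and> exact_pow2 (k + 1) (qmap M r - r) \<and> exact_pow2 (k + 3) ((qmap M ^^ 2) r - r)"
proof -
  have "4 dvd r - (4 * M + 2)" using exact_pow2_dvd[OF r, of 2] \<open>2 \<le> k\<close> by simp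
  then obtain w where "r - (4 * M + 2) = 4 * w" by blast
  then have "r = 2 * (2 * w + 2 * M + 1)" by simp
  then have r1: "exact_pow2 1 r"
    unfolding exact_pow2_def by (intro exI[of _ "2 * w + 2 * M + 1"]) simp
  then have val1: "exact_pow2 (k + 1) (qmap M r - r)"
    using exact_pow2_mult[OF r1 r] by (simp add: qmap_minus_id mult.commute)
  have "exact_pow2 2 (r * r)" using exact_pow2_mult[OF r1 r1] by (simp add: numeral_2_eq_2)
  moreover have "2 ^ Suc 2 dvd - (4 * M * (r + 1))" using \<open>even M\<close> by auto
  ultimately have "exact_pow2 2 (r * r + - (4 * M * (r + 1)))" by (rule exact_pow2_add)
  then have "exact_pow2 2 (r * r - 4 * M * (r + 1))" by simp
  from exact_pow2_mult[OF val1 this] have "exact_pow2 (k + 3) ((qmap M ^^ 2) r - r)"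
    by (simp add: qmap_twice_minus_id numeral_3_eq_3)
  with val1 r1 show ?thesis by (auto simp: exact_pow2_def)
qed

lemma exact_pow2_qmap_near_0:
  assumes M: "exact_pow2 v M" and "odd v" "2 \<le> k" and r: "exact_pow2 k r"
  shows "even r \<and> exact_pow2 (k + 1) (qmap M r - r) \<and>
    exact_pow2 (k + 1 + min (2 * k) (v + 2)) ((qmap M ^^ 2) r - r)"
proof -
  have "4 dvd r" using exact_pow2_dvd[OF r, of 2] \<open>2 \<le> k\<close> by simp
  then obtain w where w: "r = 4 * w" by blast
  then have "r - (4 * M + 2) = 2 * (2 * w - 2 * M - 1)" by simp
  then have "exact_pow2 1 (r - (4 * M + 2))"
    unfolding exact_pow2_def by (intro exI[of _ "2 * w - 2 * M - 1"]) simp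
  from exact_pow2_mult[OF r this] have val1: "exact_pow2 (k + 1) (qmap M r - r)"
    by (simp add: qmap_minus_id)
  have "exact_pow2 0 (r + 1)" using w by (simp add: exact_pow2_0)
  from exact_pow2_mult[OF exact_pow2_mult[OF exact_pow2_power[of 2] M] this]
  have "exact_pow2 (v + 2) (- (4 * M * (r + 1)))" by (simp add: exact_pow2_uminus add.commute)
  moreover have "exact_pow2 (2 * k) (r * r)" using exact_pow2_mult[OF r r] by (simp add: mult_2)
  moreover have "2 * k \<noteq> v + 2" using \<open>odd v\<close> by presburger
  ultimately have "exact_pow2 (min (2 * k) (v + 2)) (r * r + - (4 * M * (r + 1)))"
    by (intro exact_pow2_add_min)
  then have "exact_pow2 (min (2 * k) (v + 2)) (r * r - 4 * M * (r + 1))" by simp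
  from exact_pow2_mult[OF val1 this]
  have "exact_pow2 (k + 1 + min (2 * k) (v + 2)) ((qmap M ^^ 2) r - r)"
    by (simp add: qmap_twice_minus_id)
  with val1 w show ?thesis by simp
qed

section \<open>Cycles of the induced maps\<close>

definition qmap_induces :: "(z2 \<Rightarrow> z2) \<Rightarrow> int \<Rightarrow> nat \<Rightarrow> bool" where
  "qmap_induces f M l \<longleftrightarrow> (\<forall>r. 0 \<le> r \<and> r < 2 ^ l \<longrightarrow> ind f l r = qmap M r mod 2 ^ l)"

definition qorbit :: "int \<Rightarrow> nat \<Rightarrow> int \<Rightarrow> nat \<Rightarrow> int list" where
  "qorbit M l y n = map (\<lambda>i. (qmap M ^^ i) y mod 2 ^ l) [0..<n]"

lemma cycle_nonempty: "is_cycle f l t \<Longrightarrow> 0 < length t"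
  by (simp add: is_cycle_def)

lemma cycle_range: "is_cycle f l t \<Longrightarrow> y \<in> set t \<Longrightarrow> 0 \<le> y \<and> y < 2 ^ l"
  by (auto simp: is_cycle_def)

lemma cycle_ind_iter: "is_cycle f l t \<Longrightarrow> (ind f l ^^ i) (t ! 0) = t ! (i mod length t)"
  by (induction i) (auto simp: is_cycle_def mod_Suc_eq)

lemma cycle_qmap_iter:
  assumes cyc: "is_cycle f l t" and M: "qmap_induces f M l" and y: "y mod 2 ^ l = t ! 0"
  shows "(qmap M ^^ i) y mod 2 ^ l = t ! (i mod length t)"
proof (induction i)
  case 0
  then show ?case using y by simp
next
  case (Suc i)
  have "t ! (i mod length t) \<in> set t" using cycle_nonempty[OF cyc] by simp
  then have t: "0 \<le> t ! (i mod length t)" "t ! (i mod length t) < 2 ^ l"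
    using cycle_range[OF cyc] by auto
  then have "ind f l (t ! (i mod length t)) = qmap M (t ! (i mod length t)) mod 2 ^ l"
    using M by (simp add: qmap_induces_def)
  also have "\<dots> = (qmap M ^^ Suc i) y mod 2 ^ l"
    using Suc.IH t qmap_cong[of "t ! (i mod length t)" "2 ^ l" "(qmap M ^^ i) y" M] by simp
  finally show ?case
    using cycle_ind_iter[OF cyc, of i] cycle_ind_iter[OF cyc, of "Suc i"] by simp
qed

lemma cycle_qmap_iter_return_iff:
  assumes "is_cycle f l t" "qmap_induces f M l"
  shows "(qmap M ^^ i) (t ! 0) mod 2 ^ l = t ! 0 \<longleftrightarrow> length t dvd i"
proof -
  have "t ! 0 \<in> set t" using cycle_nonempty[OF assms(1)] by simp
  then have "t ! 0 mod 2 ^ l = t ! 0" using cycle_range[OF assms(1)] by simp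
  then have "(qmap M ^^ i) (t ! 0) mod 2 ^ l = t ! (i mod length t)"
    by (rule cycle_qmap_iter[OF assms])
  moreover have "t ! (i mod length t) = t ! 0 \<longleftrightarrow> i mod length t = 0"
    using assms(1) by (simp add: is_cycle_def nth_eq_iff_index_eq)
  ultimately show ?thesis by auto
qed

lemma cycle_length_eq_pow2:
  assumes "is_cycle f l t" "qmap_induces f M l"
    and "(qmap M ^^ 2 ^ Suc s) (t ! 0) mod 2 ^ l = t ! 0"
    and "(qmap M ^^ 2 ^ s) (t ! 0) mod 2 ^ l \<noteq> t ! 0"
  shows "length t = 2 ^ Suc s"
proof -
  have "length t dvd 2 ^ Suc s" "\<not> length t dvd 2 ^ s"
    using assms cycle_qmap_iter_return_iff by blast+
  moreover obtain r where "r \<le> Suc s" "length t = 2 ^ r"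
    using \<open>length t dvd 2 ^ Suc s\<close> unfolding divides_primepow_nat[OF two_is_prime_nat] by blast
  moreover have "r = Suc s"
  proof (rule ccontr)
    assume "r \<noteq> Suc s"
    with \<open>r \<le> Suc s\<close> have "2 ^ r dvd (2::nat) ^ s" by (simp add: le_imp_power_dvd)
    with \<open>length t = 2 ^ r\<close> \<open>\<not> length t dvd 2 ^ s\<close> show False by simp
  qed
  ultimately show ?thesis by simp
qed

lemma is_cycle_qorbit:
  assumes M: "qmap_induces f M l" and "0 < n"
    and "(qmap M ^^ n) y mod 2 ^ l = y mod 2 ^ l" and "distinct (qorbit M l y n)"
  shows "is_cycle f l (qorbit M l y n)"
proof -
  have step: "ind f l ((qmap M ^^ i) y mod 2 ^ l) = (qmap M ^^ Suc i) y mod 2 ^ l" for i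
    using M qmap_cong[of "(qmap M ^^ i) y mod 2 ^ l" "2 ^ l" "(qmap M ^^ i) y" M]
    by (simp add: qmap_induces_def)
  have "(qmap M ^^ Suc i) y mod 2 ^ l = (qmap M ^^ (Suc i mod n)) y mod 2 ^ l" if "i < n" for i
    using that assms(3) by (cases "Suc i = n") auto
  then show ?thesis using assms step by (auto simp: is_cycle_def qorbit_def)
qed

lemma distinct_qorbit_iff:
  "distinct (qorbit M l y n) \<longleftrightarrow>
    (\<forall>i<n. \<forall>j<n. (qmap M ^^ i) y mod 2 ^ l = (qmap M ^^ j) y mod 2 ^ l \<longrightarrow> i = j)"
  by (auto simp: qorbit_def distinct_map inj_on_def)

lemma qorbit_in_liftset:
  assumes "is_cycle f l t" "qmap_induces f M l" "y mod 2 ^ l = t ! 0"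
  shows "set (qorbit M (Suc l) y n) \<subseteq> liftset l t"
proof
  fix x assume "x \<in> set (qorbit M (Suc l) y n)"
  then obtain i where x: "x = (qmap M ^^ i) y mod 2 ^ Suc l" by (auto simp: qorbit_def)
  then have "x mod 2 ^ l = t ! (i mod length t)"
    using cycle_qmap_iter[OF assms] mod_pow2_mod_le[of l "Suc l"] by simp
  then show "x \<in> liftset l t"
    using x cycle_nonempty[OF assms(1)] by (simp add: liftset_def del: power_Suc)
qed

lemma liftset_eq_if_card:
  assumes "is_cycle f l t" "S \<subseteq> liftset l t" "card S = 2 * length t"
  shows "S = liftset l t"
proof -
  have rng: "set t \<subseteq> {0..<2 ^ l}" and dist: "distinct t" using assms(1) by (auto simp: is_cycle_def)
  have eq: "liftset l t = set t \<union> (\<lambda>r. r + 2 ^ l) ` set t"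
  proof (intro equalityI subsetI)
    fix y assume "y \<in> liftset l t"
    then have y: "0 \<le> y" "y < 2 * 2 ^ l" "y mod 2 ^ l \<in> set t" by (auto simp: liftset_def)
    show "y \<in> set t \<union> (\<lambda>r. r + 2 ^ l) ` set t"
    proof (cases "y < 2 ^ l")
      case False
      have "y mod 2 ^ l = (y - 2 ^ l) mod 2 ^ l" by (metis diff_add_cancel mod_add_self2)
      also have "\<dots> = y - 2 ^ l" using y False by (intro mod_pos_pos_trivial) auto
      finally have "y mod 2 ^ l = y - 2 ^ l" .
      then show ?thesis using y by (auto intro: rev_image_eqI[of "y - 2 ^ l"])
    qed (use y in simp)
  qed (use rng in \<open>auto simp: liftset_def\<close>)
  have "r + 2 ^ l \<notin> set t" if "r \<in> set t" for r
    using subsetD[OF rng that] subsetD[OF rng, of "r + 2 ^ l"] by auto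
  then have "set t \<inter> (\<lambda>r. r + 2 ^ l) ` set t = {}" by auto
  then have "card (liftset l t) = 2 * length t"
    using dist by (simp add: eq card_Un_disjoint card_image distinct_card)
  with assms(2,3) show ?thesis by (simp add: card_subset_eq eq)
qed

lemma qorbit_index_eq:
  assumes cyc: "is_cycle f l t" and M: "qmap_induces f M l"
    and "y mod 2 ^ l = t ! 0" "y' mod 2 ^ l = t ! 0" "i < length t" "j < length t"
    and "(qmap M ^^ i) y mod 2 ^ Suc l = (qmap M ^^ j) y' mod 2 ^ Suc l"
  shows "i = j"
proof -
  have "(qmap M ^^ i) y mod 2 ^ l = (qmap M ^^ j) y' mod 2 ^ l"
    using mod_pow2_eq_le[OF _ assms(7)] by simp
  then have "t ! i = t ! j" using cycle_qmap_iter[OF cyc M] assms(3-6) by simp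
  then show "i = j" using cyc assms(5,6) by (simp add: is_cycle_def nth_eq_iff_index_eq)
qed

text \<open>The two lifts t!0 and t!0 + 2^l differ by exactly 2^l, and iterating qmap preserves
  this, so their orbits modulo 2^(l+1) are disjoint.\<close>

lemma cycle_splits:
  assumes cyc: "is_cycle f l t" and M: "qmap_induces f M l" "qmap_induces f M (Suc l)"
    and "2 \<le> l" and even: "even (t ! 0)"
    and return: "\<And>y. y mod 2 ^ l = t ! 0 \<Longrightarrow> 2 ^ Suc l dvd (qmap M ^^ length t) y - y"
  shows "splits f l t"
proof -
  define L where "L = length t"
  define y where "y = t ! 0"
  define y' where "y' = y + 2 ^ l"
  define t1 t2 where "t1 = qorbit M (Suc l) y L" and "t2 = qorbit M (Suc l) y' L"
  have lifts: "y mod 2 ^ l = t ! 0" "y' mod 2 ^ l = t ! 0"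
    using cycle_range[OF cyc, of "t ! 0"] cycle_nonempty[OF cyc] by (simp_all add: y_def y'_def)
  have "distinct t1" "distinct t2"
    using qorbit_index_eq[OF cyc M(1) lifts(1) lifts(1)] qorbit_index_eq[OF cyc M(1) lifts(2) lifts(2)]
    by (auto simp: t1_def t2_def L_def distinct_qorbit_iff)
  moreover have "(qmap M ^^ L) z mod 2 ^ Suc l = z mod 2 ^ Suc l" if "z mod 2 ^ l = t ! 0" for z
    using return[OF that] by (simp add: L_def mod_eq_dvd_iff del: power_Suc)
  ultimately have cycles: "is_cycle f (Suc l) t1" "is_cycle f (Suc l) t2"
    using is_cycle_qorbit[OF M(2)] lifts cycle_nonempty[OF cyc] by (auto simp: t1_def t2_def L_def)
  have disj: "set t1 \<inter> set t2 = {}"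
  proof (rule ccontr)
    assume "set t1 \<inter> set t2 \<noteq> {}"
    then obtain i j where ij: "i < L" "j < L"
      and eq: "(qmap M ^^ i) y mod 2 ^ Suc l = (qmap M ^^ j) y' mod 2 ^ Suc l"
      by (auto simp: t1_def t2_def qorbit_def)
    then have "i = j" using qorbit_index_eq[OF cyc M(1) lifts] by (simp add: L_def)
    have "exact_pow2 l ((qmap M ^^ i) y' - (qmap M ^^ i) y)"
      using exact_pow2_qmap_iter_diff[OF even[folded y_def] \<open>2 \<le> l\<close> exact_pow2_power]
      by (simp add: y'_def)
    then have "(qmap M ^^ i) y' mod 2 ^ Suc l \<noteq> (qmap M ^^ i) y mod 2 ^ Suc l"
      by (rule exact_pow2_mod_neq) simp
    with eq \<open>i = j\<close> show False by metis
  qed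
  have sub: "set t1 \<union> set t2 \<subseteq> liftset l t"
    using qorbit_in_liftset[OF cyc M(1)] lifts by (simp add: t1_def t2_def)
  have lengths: "length t1 = length t" "length t2 = length t"
    by (simp_all add: t1_def t2_def qorbit_def L_def)
  then have "card (set t1 \<union> set t2) = 2 * length t"
    using disj \<open>distinct t1\<close> \<open>distinct t2\<close> by (simp add: card_Un_disjoint distinct_card)
  then have "set t1 \<union> set t2 = liftset l t" by (rule liftset_eq_if_card[OF cyc sub])
  then show ?thesis using cycles disj lengths unfolding splits_def by blast
qed

lemma mod_eq_less_double_imp_eq_add:
  fixes i j L :: nat
  assumes "i < j" "j < 2 * L" "i mod L = j mod L"
  shows "j = i + L"
proof -
  have "L dvd j - i" using mod_eq_dvd_iff_nat[of i j L] assms(1,3) by simp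
  then obtain c where c: "j - i = L * c" by (rule dvdE)
  have "L * c < L * 2" using c assms(2) by linarith
  moreover have "c \<noteq> 0" using c assms(1) by (metis diff_is_0_eq mult_0_right not_le)
  ultimately have "c = 1" by simp
  with c assms(1) show ?thesis by simp
qed

text \<open>After one lap the orbit of t!0 is displaced by exactly 2^l, and so is every later
  point; hence the orbit cannot close up modulo 2^(l+1) before the second lap ends.\<close>

lemma qmap_iter_mod_Suc_neq:
  assumes cyc: "is_cycle f l t" and M: "qmap_induces f M l" and "2 \<le> l" and even: "even (t ! 0)"
    and exact: "exact_pow2 l ((qmap M ^^ length t) (t ! 0) - t ! 0)"
    and "i < j" "j < 2 * length t"
  shows "(qmap M ^^ i) (t ! 0) mod 2 ^ Suc l \<noteq> (qmap M ^^ j) (t ! 0) mod 2 ^ Suc l"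
proof
  define y where "y = t ! 0"
  have lift: "y mod 2 ^ l = t ! 0"
    using cycle_range[OF cyc, of "t ! 0"] cycle_nonempty[OF cyc] by (simp add: y_def)
  assume eq: "(qmap M ^^ i) (t ! 0) mod 2 ^ Suc l = (qmap M ^^ j) (t ! 0) mod 2 ^ Suc l"
  then have "(qmap M ^^ i) y mod 2 ^ l = (qmap M ^^ j) y mod 2 ^ l"
    using mod_pow2_eq_le[OF _ eq] by (simp add: y_def)
  then have "t ! (i mod length t) = t ! (j mod length t)" using cycle_qmap_iter[OF cyc M lift] by simp
  then have "i mod length t = j mod length t"
    using cyc cycle_nonempty[OF cyc] by (simp add: is_cycle_def nth_eq_iff_index_eq)
  then have j: "j = i + length t" using mod_eq_less_double_imp_eq_add assms(6,7) by blast
  define h where "h = (qmap M ^^ length t) y - y"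
  have "(qmap M ^^ j) y = (qmap M ^^ i) (y + h)" by (simp add: j h_def funpow_add)
  moreover have "exact_pow2 l ((qmap M ^^ i) (y + h) - (qmap M ^^ i) y)"
    using exact by (intro exact_pow2_qmap_iter_diff[OF even[folded y_def] \<open>2 \<le> l\<close>])
      (simp add: h_def y_def)
  ultimately have "exact_pow2 l ((qmap M ^^ j) y - (qmap M ^^ i) y)" by simp
  then have "(qmap M ^^ j) y mod 2 ^ Suc l \<noteq> (qmap M ^^ i) y mod 2 ^ Suc l"
    by (rule exact_pow2_mod_neq) simp
  with eq show False by (metis y_def)
qed

lemma cycle_grows:
  assumes cyc: "is_cycle f l t" and M: "qmap_induces f M l" "qmap_induces f M (Suc l)"
    and "2 \<le> l" and even: "even (t ! 0)"
    and exact: "exact_pow2 l ((qmap M ^^ length t) (t ! 0) - t ! 0)"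
    and return: "2 ^ Suc l dvd (qmap M ^^ (2 * length t)) (t ! 0) - t ! 0"
  shows "grows f l t"
proof -
  define t1 where "t1 = qorbit M (Suc l) (t ! 0) (2 * length t)"
  have lift: "t ! 0 mod 2 ^ l = t ! 0"
    using cycle_range[OF cyc, of "t ! 0"] cycle_nonempty[OF cyc] by simp
  have "distinct t1"
    unfolding t1_def distinct_qorbit_iff
    using qmap_iter_mod_Suc_neq[OF cyc M(1) \<open>2 \<le> l\<close> even exact] by (metis linorder_neqE_nat)
  then have "is_cycle f (Suc l) t1"
    using is_cycle_qorbit[OF M(2)] return cycle_nonempty[OF cyc]
    by (simp add: t1_def mod_eq_dvd_iff del: power_Suc)
  moreover have length: "length t1 = 2 * length t" by (simp add: t1_def qorbit_def)
  moreover have "set t1 = liftset l t"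
    using liftset_eq_if_card[OF cyc qorbit_in_liftset[OF cyc M(1) lift]] \<open>distinct t1\<close> length
    by (simp add: distinct_card t1_def)
  ultimately show ?thesis unfolding grows_def by blast
qed

section \<open>A criterion for type II\<close>

lemma cycle_splits_if_exact_pow2:
  assumes cyc: "is_cycle f l t" and M: "qmap_induces f M l" "qmap_induces f M (Suc l)"
    and "2 \<le> l" "a < l" "l < e"
    and val: "\<And>z. z mod 2 ^ l = t ! 0 \<Longrightarrow>
      even z \<and> exact_pow2 a (qmap M z - z) \<and> exact_pow2 e ((qmap M ^^ 2) z - z)"
  shows "splits f l t"
proof -
  define y where "y = t ! 0"
  have "y \<in> set t" using cycle_nonempty[OF cyc] by (simp add: y_def)
  then have y: "0 \<le> y" "y < 2 ^ l" using cycle_range[OF cyc] by auto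
  then have val1: "exact_pow2 a (qmap M y - y)" and val2: "exact_pow2 e ((qmap M ^^ 2) y - y)"
    using val by (simp_all add: y_def)
  have "(qmap M ^^ 2 ^ 0) y mod 2 ^ l \<noteq> y"
    using exact_pow2_mod_neq[OF val1, of l] \<open>a < l\<close> y by simp
  moreover have "2 ^ l dvd (qmap M ^^ 2) y - y" using exact_pow2_dvd[OF val2, of l] \<open>l < e\<close> by simp
  then have "(qmap M ^^ 2 ^ Suc 0) y mod 2 ^ l = y" using y by (simp add: mod_eq_dvd_iff[symmetric])
  ultimately have "length t = 2" using cycle_length_eq_pow2[OF cyc M(1), of 0] by (simp add: y_def)
  moreover have "2 ^ Suc l dvd (qmap M ^^ 2) z - z" if "z mod 2 ^ l = t ! 0" for z
    using exact_pow2_dvd[of e "(qmap M ^^ 2) z - z" "Suc l"] val[OF that] \<open>l < e\<close> by simp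
  ultimately show ?thesis
    using cycle_splits[OF cyc M \<open>2 \<le> l\<close>] val[of "t ! 0"] y by (simp add: y_def)
qed

lemma cycle_grows_if_exact_pow2:
  assumes cyc: "is_cycle f l t" and M: "qmap_induces f M l" "qmap_induces f M (Suc l)"
    and "2 \<le> e" "a < l" "e \<le> l"
    and even: "even (t ! 0)" and val1: "exact_pow2 a (qmap M (t ! 0) - t ! 0)"
    and val2: "exact_pow2 e ((qmap M ^^ 2) (t ! 0) - t ! 0)"
  shows "grows f l t"
proof -
  define y where "y = t ! 0"
  have "y \<in> set t" using cycle_nonempty[OF cyc] by (simp add: y_def)
  then have y: "0 \<le> y" "y < 2 ^ l" using cycle_range[OF cyc] by auto
  obtain i where l: "l = e + i" using \<open>e \<le> l\<close> le_Suc_ex by blast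
  have val_i: "exact_pow2 l ((qmap M ^^ 2 ^ Suc i) y - y)"
    and val_Suc_i: "exact_pow2 (Suc l) ((qmap M ^^ 2 ^ Suc (Suc i)) y - y)"
    using exact_pow2_qmap_iter_pow2[OF even \<open>2 \<le> e\<close> val2, of i]
      exact_pow2_qmap_iter_pow2[OF even \<open>2 \<le> e\<close> val2, of "Suc i"] l
    by (simp_all add: y_def)
  have "(qmap M ^^ 2 ^ i) y mod 2 ^ l \<noteq> y"
  proof (cases i)
    case 0
    then show ?thesis using exact_pow2_mod_neq[OF val1, of l] \<open>a < l\<close> y by (simp add: y_def)
  next
    case (Suc j)
    have "e + j < l" using l Suc by simp
    with exact_pow2_qmap_iter_pow2[OF even \<open>2 \<le> e\<close> val2, of j]
    have "(qmap M ^^ 2 ^ Suc j) (t ! 0) mod 2 ^ l \<noteq> t ! 0 mod 2 ^ l" by (rule exact_pow2_mod_neq)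
    then show ?thesis using Suc y by (simp add: y_def)
  qed
  moreover have "(qmap M ^^ 2 ^ Suc i) y mod 2 ^ l = y"
    using exact_pow2_dvd[OF val_i, of l] y by (simp add: mod_eq_dvd_iff[of _ _ y, symmetric])
  ultimately have "length t = 2 ^ Suc i"
    using cycle_length_eq_pow2[OF cyc M(1), of i] by (simp add: y_def)
  moreover have "2 ^ Suc l dvd (qmap M ^^ 2 ^ Suc (Suc i)) y - y"
    using exact_pow2_dvd[OF val_Suc_i, of "Suc l"] by simp
  ultimately show ?thesis
    using cycle_grows[OF cyc M] \<open>2 \<le> e\<close> \<open>e \<le> l\<close> even val_i by (simp add: y_def)
qed

lemma splits_then_grows_if_exact_pow2:
  assumes "2 \<le> N"
    and hM: "\<And>l. N \<le> l \<Longrightarrow> \<exists>M. qmap_induces f M l \<and> qmap_induces f M (Suc l) \<and>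
        (\<forall>r. r mod 2 ^ N \<in> set \<sigma> \<longrightarrow>
          even r \<and> exact_pow2 (N - 1) (qmap M r - r) \<and> exact_pow2 (N + k) ((qmap M ^^ 2) r - r))"
  shows "splits_then_grows f N \<sigma> k"
proof -
  have "(l < N + k \<longrightarrow> splits f l t) \<and> (N + k \<le> l \<longrightarrow> grows f l t)"
    if "N \<le> l" and cyc: "is_cycle f l t" and "above N \<sigma> l t" for l t
  proof -
    obtain M where M: "qmap_induces f M l" "qmap_induces f M (Suc l)"
      and val: "\<And>r. r mod 2 ^ N \<in> set \<sigma> \<Longrightarrow>
          even r \<and> exact_pow2 (N - 1) (qmap M r - r) \<and> exact_pow2 (N + k) ((qmap M ^^ 2) r - r)"
      using hM[OF \<open>N \<le> l\<close>] by blast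
    have "t ! 0 mod 2 ^ N \<in> set \<sigma>"
      using cycle_nonempty[OF cyc] \<open>above N \<sigma> l t\<close> by (simp add: above_def)
    then have val_lift: "even z \<and> exact_pow2 (N - 1) (qmap M z - z) \<and>
        exact_pow2 (N + k) ((qmap M ^^ 2) z - z)" if "z mod 2 ^ l = t ! 0" for z
      using val mod_pow2_mod_le[OF \<open>N \<le> l\<close>, of z] that by simp
    have "t ! 0 mod 2 ^ l = t ! 0" using cycle_range[OF cyc, of "t ! 0"] cycle_nonempty[OF cyc] by simp
    then show ?thesis
      using cycle_splits_if_exact_pow2[OF cyc M, of "N - 1" "N + k"]
        cycle_grows_if_exact_pow2[OF cyc M, of "N + k" "N - 1"] val_lift \<open>2 \<le> N\<close> \<open>N \<le> l\<close>
      by simp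
  qed
  then show ?thesis by (auto simp: splits_then_grows_def)
qed

text \<open>The ball x + 2^(n-1) Z_2 consists of two balls of level n, and a displacement of exact
  valuation n - 1 swaps them.\<close>

lemma is_cycle_zball_halves:
  assumes "2 \<le> n" "qmap_induces f M n"
    and swap: "\<And>r. r mod 2 ^ (n - 1) = res (n - 1) x \<Longrightarrow> exact_pow2 (n - 1) (qmap M r - r)"
  shows "is_cycle f n [res n x, res n (x + z2 (2 ^ (n - 1)))]"
proof -
  define x' where "x' = x + z2 (2 ^ (n - 1))"
  have n: "Suc (n - 1) = n" using \<open>2 \<le> n\<close> by simp
  have pow: "(2::int) ^ (n - 1) + 2 ^ (n - 1) = 2 ^ n" using n by (metis mult_2 power_Suc)
  have x': "res n x' = (res n x + 2 ^ (n - 1)) mod 2 ^ n"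
    by (simp add: x'_def res_add res_z2 mod_simps)
  have "res (n - 1) x' = res (n - 1) x" by (simp add: x'_def res_add res_z2)
  then have halves: "r mod 2 ^ (n - 1) = res (n - 1) x" if "r \<in> {res n x, res n x'}" for r
    using that res_mod_le[of "n - 1" n] by auto
  have "ind f n r = (r + 2 ^ (n - 1)) mod 2 ^ n" if "r \<in> {res n x, res n x'}" for r
  proof -
    have "0 \<le> r" "r < 2 ^ n" using that by auto
    then have "ind f n r = qmap M r mod 2 ^ n" using assms(2) by (simp add: qmap_induces_def)
    also have "\<dots> = (r + 2 ^ (n - 1)) mod 2 ^ n"
      using exact_pow2_mod_Suc[OF swap[OF halves[OF that]]] n by simp
    finally show ?thesis .
  qed
  then have "ind f n (res n x) = res n x'" "ind f n (res n x') = res n x"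
    using x' pow by (simp_all add: mod_simps add.assoc)
  moreover have "res n x \<noteq> res n x'"
  proof
    assume "res n x = res n x'"
    then have "(res n x + 2 ^ (n - 1)) mod 2 ^ n = res n x mod 2 ^ n" using x' by simp
    then have "2 ^ n dvd (res n x + 2 ^ (n - 1)) - res n x" by (simp only: mod_eq_dvd_iff)
    then have "(2::int) ^ n \<le> 2 ^ (n - 1)" by (intro zdvd_imp_le) simp_all
    then show False using \<open>2 \<le> n\<close> by simp
  qed
  ultimately show ?thesis by (auto simp: is_cycle_def less_Suc_eq x'_def)
qed

lemma typeII_zball:
  assumes "2 \<le> n"
    and hM: "\<And>l. n \<le> l \<Longrightarrow> \<exists>M. qmap_induces f M l \<and> qmap_induces f M (Suc l) \<and>
        (\<forall>r. r mod 2 ^ (n - 1) = res (n - 1) x \<longrightarrow>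
          even r \<and> exact_pow2 (n - 1) (qmap M r - r) \<and> exact_pow2 (n + k) ((qmap M ^^ 2) r - r))"
  shows "typeII f (zball x (n - 1)) k"
proof -
  define x' where "x' = x + z2 (2 ^ (n - 1))"
  have "res (n - 1) x' = res (n - 1) x" by (simp add: x'_def res_add res_z2)
  then have "r mod 2 ^ (n - 1) = res (n - 1) x" if "r mod 2 ^ n \<in> set [res n x, res n x']" for r
    using that mod_pow2_mod_le[of "n - 1" n r] res_mod_le[of "n - 1" n] by auto
  then have "splits_then_grows f n [res n x, res n x'] k"
    using hM by (intro splits_then_grows_if_exact_pow2[OF \<open>2 \<le> n\<close>]) blast
  moreover obtain M where "qmap_induces f M n"
    and "\<And>r. r mod 2 ^ (n - 1) = res (n - 1) x \<Longrightarrow> exact_pow2 (n - 1) (qmap M r - r)"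
    using hM[of n] by blast
  then have "is_cycle f n [res n x, res n x']"
    unfolding x'_def by (rule is_cycle_zball_halves[OF \<open>2 \<le> n\<close>])
  moreover have "zball x (n - 1) = zball x n \<union> zball x' n"
    using zball_split[of x "n - 1"] \<open>2 \<le> n\<close> by (simp add: x'_def)
  ultimately show ?thesis
    unfolding typeII_def using \<open>2 \<le> n\<close> by (intro exI[of _ n] exI[of _ x] exI[of _ x']) auto
qed

section \<open>Even 2-adic integers\<close>

lemma two_le_v2:
  assumes "x \<noteq> 0" "res 2 x = 0"
  shows "2 \<le> v2 x"
proof (rule ccontr)
  assume "\<not> 2 \<le> v2 x"
  then have "res (Suc (v2 x)) x = res 2 x mod 2 ^ Suc (v2 x)"
    using res_mod_le[of "Suc (v2 x)" 2 x] by simp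
  with assms show False using res_Suc_v2_neq_0 by simp
qed

lemma mem_shell_iff:
  "2 \<le> n \<Longrightarrow> y \<in> zball (a + z2 (2 ^ (n - 2))) (n - 1) \<longleftrightarrow> y \<noteq> a \<and> v2 (y - a) = n - 2"
  using mem_zball_shift_iff[of y a "n - 2"] by (simp add: Suc_diff_Suc numeral_2_eq_2)

lemma res2_shell: "4 \<le> n \<Longrightarrow> y \<in> zball (a + z2 (2 ^ (n - 2))) (n - 1) \<Longrightarrow> res 2 y = res 2 a"
proof -
  assume "4 \<le> n" "y \<in> zball (a + z2 (2 ^ (n - 2))) (n - 1)"
  then have "res 2 y = res 2 (a + z2 (2 ^ (n - 2)))" using zball_res by simp
  moreover have "(4::int) dvd 2 ^ (n - 2)"
    using le_imp_power_dvd[of 2 "n - 2" "2::int"] \<open>4 \<le> n\<close> by simp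
  ultimately show ?thesis using res_mod[of 2 a] by (simp add: res_add res_z2 mod_simps)
qed

lemma shells_disjoint:
  "2 \<le> i \<Longrightarrow> 2 \<le> j \<Longrightarrow> i \<noteq> j \<Longrightarrow>
    disjnt (zball (a + z2 (2 ^ (i - 2))) (i - 1)) (zball (a + z2 (2 ^ (j - 2))) (j - 1))"
proof -
  assume "2 \<le> i" "2 \<le> j" "i \<noteq> j"
  have False
    if "y \<in> zball (a + z2 (2 ^ (i - 2))) (i - 1)" "y \<in> zball (a + z2 (2 ^ (j - 2))) (j - 1)" for y
  proof -
    have "v2 (y - a) = i - 2" "v2 (y - a) = j - 2"
      using that mem_shell_iff \<open>2 \<le> i\<close> \<open>2 \<le> j\<close> by blast+
    with \<open>2 \<le> i\<close> \<open>2 \<le> j\<close> \<open>i \<noteq> j\<close> show False by simp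
  qed
  then show ?thesis unfolding disjnt_def by blast
qed

lemma even_z2_partition:
  assumes "res 2 a = 2"
  defines "U1 \<equiv> \<Union>n\<in>{4..}. zball (a + z2 (2 ^ (n - 2))) (n - 1)"
    and "U2 \<equiv> \<Union>n\<in>{4..}. zball (z2 (2 ^ (n - 2))) (n - 1)"
  shows "{x. res 1 x = 0} = {0, a} \<union> U1 \<union> U2"
    and "a \<noteq> 0" "{0, a} \<inter> U1 = {}" "{0, a} \<inter> U2 = {}" "U1 \<inter> U2 = {}"
proof -
  have res1: "res 1 x = res 2 x mod 2" for x using res_mod_le[of 1 2 x] by simp
  have U1: "y \<noteq> a \<and> res 2 y = 2" if "y \<in> U1" for y
    using that mem_shell_iff[of _ y a] res2_shell[of _ y a] assms(1) by (auto simp: U1_def)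
  have U2: "y \<noteq> 0 \<and> res 2 y = 0" if "y \<in> U2" for y
    using that mem_shell_iff[of _ y 0] res2_shell[of _ y 0]
    by (auto simp: U2_def z2_add_0_left z2_diff_0_right)
  have "x \<in> U1 \<union> U2" if "res 1 x = 0" "x \<noteq> 0" "x \<noteq> a" for x
  proof (cases "res 2 x = 0")
    case True
    with that have "x \<in> zball (0 + z2 (2 ^ (v2 x + 2 - 2))) (v2 x + 2 - 1)"
      by (subst mem_shell_iff) (simp_all add: z2_diff_0_right)
    with two_le_v2[OF \<open>x \<noteq> 0\<close> True] show ?thesis
      unfolding U2_def by (intro UnI2 UN_I[of "v2 x + 2"]) (simp_all add: z2_add_0_left)
  next
    case False
    moreover have "res 2 x mod 2 = 0" "res 2 x < 4" using that res1[of x] res_less[of 2 x] by simp_all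
    ultimately have "res 2 x = 2" using res_nonneg[of 2 x] by presburger
    with assms(1) have "res 2 (x - a) = 0" by (simp add: res_diff)
    moreover have "x - a \<noteq> 0" using \<open>x \<noteq> a\<close> by (simp add: z2_diff_eq_0_iff)
    ultimately have "2 \<le> v2 (x - a)" by (rule two_le_v2[rotated])
    moreover have "x \<in> zball (a + z2 (2 ^ (v2 (x - a) + 2 - 2))) (v2 (x - a) + 2 - 1)"
      using \<open>x \<noteq> a\<close> by (subst mem_shell_iff) simp_all
    ultimately show ?thesis unfolding U1_def by (intro UnI1 UN_I[of "v2 (x - a) + 2"]) simp_all
  qed
  then have "{x. res 1 x = 0} \<subseteq> {0, a} \<union> U1 \<union> U2" by blast
  moreover have "{0, a} \<union> U1 \<union> U2 \<subseteq> {x. res 1 x = 0}"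
    using U1 U2 res1 assms(1) by auto
  ultimately show "{x. res 1 x = 0} = {0, a} \<union> U1 \<union> U2" by (rule equalityI)
  show "a \<noteq> 0" using assms(1) by auto
  show "{0, a} \<inter> U1 = {}" "{0, a} \<inter> U2 = {}" "U1 \<inter> U2 = {}"
    using U1[of 0] U1[of a] U2[of 0] U2[of a] assms(1) by (auto dest!: U1 U2)
qed

section \<open>The quadratic map\<close>

locale z2_quadratic =
  fixes m :: z2 and f :: "z2 \<Rightarrow> z2"
  assumes f_eq: "\<And>x. f x = x * x + (z2 (-1) - z2 4 * m) * x"
begin

lemma res_f:
  assumes "M mod 2 ^ l = res l m"
  shows "res l (f x) = qmap M (res l x) mod 2 ^ l"
proof -
  have "res l (f x) = (res l x * res l x mod 2 ^ l + (((- 1) mod 2 ^ l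
      - (4 mod 2 ^ l) * (M mod 2 ^ l) mod 2 ^ l) mod 2 ^ l) * res l x mod 2 ^ l) mod 2 ^ l"
    unfolding f_eq by (simp add: res_add res_mult res_diff res_z2 assms)
  also have "\<dots> = qmap M (res l x) mod 2 ^ l"
    unfolding qmap_def by (simp add: mod_simps algebra_simps)
  finally show ?thesis .
qed

lemma qmap_induces_f: "M mod 2 ^ l = res l m \<Longrightarrow> qmap_induces f M l"
  by (simp add: qmap_induces_def ind_def res_f res_z2)

lemma res_fixed_point:
  assumes "M mod 2 ^ l = res l m"
  shows "res l (z2 4 * m + z2 2) = (4 * M + 2) mod 2 ^ l"
  by (simp add: res_add res_mult res_z2 mod_simps flip: assms)

lemma fixed_point_iff: "f x = x \<longleftrightarrow> x = 0 \<or> x = z2 4 * m + z2 2" (is "_ \<longleftrightarrow> _ \<or> x = ?p")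
proof
  assume "f x = x"
  show "x = 0 \<or> x = ?p"
  proof (rule ccontr)
    assume "\<not> (x = 0 \<or> x = ?p)"
    then have "x \<noteq> 0" "x - ?p \<noteq> 0" by (simp_all add: z2_diff_eq_0_iff)
    define n where "n = v2 x + v2 (x - ?p) + 1"
    define M where "M = res n m"
    define X where "X = res n x"
    have M: "M mod 2 ^ n = res n m" by (simp add: M_def)
    have "qmap M X mod 2 ^ n = X mod 2 ^ n" using res_f[OF M, of x] \<open>f x = x\<close> by (simp add: X_def)
    then have dvd: "2 ^ n dvd X * (X - (4 * M + 2))" by (simp add: mod_eq_dvd_iff flip: qmap_minus_id)
    have "v2 x < n" "v2 (x - ?p) < n" by (simp_all add: n_def)
    have "exact_pow2 (v2 x) X" using exact_pow2_res[OF \<open>x \<noteq> 0\<close> \<open>v2 x < n\<close>] by (simp add: X_def)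
    moreover have "exact_pow2 (v2 (x - ?p)) (X - (4 * M + 2))"
      by (rule exact_pow2_of_res[OF \<open>x - ?p \<noteq> 0\<close> \<open>v2 (x - ?p) < n\<close>])
        (simp add: X_def res_diff res_fixed_point[OF M] mod_simps)
    ultimately have "exact_pow2 (v2 x + v2 (x - ?p)) (X * (X - (4 * M + 2)))" by (rule exact_pow2_mult)
    from exact_pow2_dvd[OF this, of n] dvd show False by (simp add: n_def)
  qed
next
  have "res n (f x) = res n x" if "x = 0 \<or> x = ?p" for n
  proof -
    define M where "M = res n m"
    have M: "M mod 2 ^ n = res n m" by (simp add: M_def)
    from that show ?thesis
    proof
      assume "x = ?p"
      then have x: "res n x = (4 * M + 2) mod 2 ^ n" by (simp add: res_fixed_point[OF M])
      have "res n (f x) = qmap M (4 * M + 2) mod 2 ^ n"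
        using res_f[OF M, of x] qmap_cong[of "res n x" "2 ^ n" "4 * M + 2" M] x by simp
      also have "\<dots> = res n x" using qmap_minus_id[of M "4 * M + 2"] x by simp
      finally show ?thesis .
    qed (simp add: res_f[OF M] qmap_def)
  qed
  then show "x = 0 \<or> x = ?p \<Longrightarrow> f x = x" by (simp add: z2_eq_iff)
qed

lemma res1_f_of_odd: "res 1 x = 1 \<Longrightarrow> res 1 (f x) = 0"
  using res_f[OF res_mod[of 1 m], of x] by (simp add: qmap_def)

lemma typeII_zball_f:
  assumes "m \<noteq> 0" "2 \<le> n"
    and val: "\<And>M r. exact_pow2 (v2 m) M \<Longrightarrow> M mod 2 ^ (n - 1) = res (n - 1) m \<Longrightarrow>
        r mod 2 ^ (n - 1) = res (n - 1) x \<Longrightarrow>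
        even r \<and> exact_pow2 (n - 1) (qmap M r - r) \<and> exact_pow2 (n + k) ((qmap M ^^ 2) r - r)"
  shows "typeII f (zball x (n - 1)) k"
proof (rule typeII_zball[OF \<open>2 \<le> n\<close>])
  fix l assume "n \<le> l"
  define M where "M = res (Suc l + v2 m) m"
  have M: "M mod 2 ^ j = res j m" if "j \<le> Suc l + v2 m" for j
    using that by (simp add: M_def res_mod_le)
  have "exact_pow2 (v2 m) M"
    using exact_pow2_res[OF \<open>m \<noteq> 0\<close>, of "Suc l + v2 m"] by (simp add: M_def)
  moreover have "M mod 2 ^ (n - 1) = res (n - 1) m" using M \<open>n \<le> l\<close> by simp
  ultimately show "\<exists>M. qmap_induces f M l \<and> qmap_induces f M (Suc l) \<and>
      (\<forall>r. r mod 2 ^ (n - 1) = res (n - 1) x \<longrightarrow>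
        even r \<and> exact_pow2 (n - 1) (qmap M r - r) \<and> exact_pow2 (n + k) ((qmap M ^^ 2) r - r))"
    using val qmap_induces_f[OF M[of l]] qmap_induces_f[OF M[of "Suc l"]] by (intro exI[of _ M]) simp
qed

lemma typeII_near_fixed_point:
  assumes "m \<noteq> 0" "0 < v2 m" "4 \<le> n"
  shows "typeII f (zball (z2 4 * m + z2 2 + z2 (2 ^ (n - 2))) (n - 1)) 1"
proof (rule typeII_zball_f[OF \<open>m \<noteq> 0\<close>])
  show "2 \<le> n" using \<open>4 \<le> n\<close> by simp
  have n: "Suc (n - 2) = n - 1" "n - 2 + 1 = n - 1" "n - 2 + 3 = n + 1" using \<open>4 \<le> n\<close> by simp_all
  fix M r assume M: "exact_pow2 (v2 m) M" "M mod 2 ^ (n - 1) = res (n - 1) m"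
    and r: "r mod 2 ^ (n - 1) = res (n - 1) (z2 4 * m + z2 2 + z2 (2 ^ (n - 2)))"
  have "even M" using exact_pow2_dvd[OF M(1), of 1] \<open>0 < v2 m\<close> by simp
  have "res (n - 1) (z2 4 * m + z2 2 + z2 (2 ^ (n - 2)))
      = ((4 * M + 2) mod 2 ^ (n - 1) + 2 ^ (n - 2) mod 2 ^ (n - 1)) mod 2 ^ (n - 1)"
    by (simp only: res_add[of "n - 1" "z2 4 * m + z2 2"] res_fixed_point[OF M(2)] res_z2)
  with r have "r mod 2 ^ (n - 1) = (4 * M + 2 + 2 ^ (n - 2)) mod 2 ^ (n - 1)"
    by (simp add: mod_simps)
  then have "(r - (4 * M + 2)) mod 2 ^ (n - 1) = 2 ^ (n - 2) mod 2 ^ (n - 1)"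
    using mod_diff_cong[of r "2 ^ (n - 1)" "4 * M + 2 + 2 ^ (n - 2)" "4 * M + 2" "4 * M + 2"] by simp
  then have "(r - (4 * M + 2)) mod 2 ^ Suc (n - 2) = 2 ^ (n - 2)"
    unfolding n(1) using \<open>4 \<le> n\<close> by simp
  then have "exact_pow2 (n - 2) (r - (4 * M + 2))" by (rule exact_pow2_of_mod)
  from exact_pow2_qmap_near_4M2[OF \<open>even M\<close> _ this] \<open>4 \<le> n\<close>
  show "even r \<and> exact_pow2 (n - 1) (qmap M r - r) \<and> exact_pow2 (n + 1) ((qmap M ^^ 2) r - r)"
    by (simp only: n)
qed

lemma typeII_near_0:
  assumes "m \<noteq> 0" "odd (v2 m)" "4 \<le> n"
  shows "typeII f (zball (z2 (2 ^ (n - 2))) (n - 1)) (min (2 * n - 5) (v2 m + 1))"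
proof (rule typeII_zball_f[OF \<open>m \<noteq> 0\<close>])
  show "2 \<le> n" using \<open>4 \<le> n\<close> by simp
  have n: "Suc (n - 2) = n - 1" "n - 2 + 1 = n - 1"
    "n - 1 + min (2 * (n - 2)) (v2 m + 2) = n + min (2 * n - 5) (v2 m + 1)"
    using \<open>4 \<le> n\<close> by simp_all
  fix M r assume M: "exact_pow2 (v2 m) M"
    and r: "r mod 2 ^ (n - 1) = res (n - 1) (z2 (2 ^ (n - 2)))"
  have "r mod 2 ^ Suc (n - 2) = 2 ^ (n - 2)"
    using r \<open>4 \<le> n\<close> by (simp add: res_z2 n(1) del: power_Suc)
  then have "exact_pow2 (n - 2) r" by (rule exact_pow2_of_mod)
  from exact_pow2_qmap_near_0[OF M \<open>odd (v2 m)\<close> _ this] \<open>4 \<le> n\<close>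
  show "even r \<and> exact_pow2 (n - 1) (qmap M r - r) \<and>
      exact_pow2 (n + min (2 * n - 5) (v2 m + 1)) ((qmap M ^^ 2) r - r)"
    by (simp only: n)
qed

end

theorem theorem6p4:
  fixes m :: z2 and f :: "z2 \<Rightarrow> z2"
  assumes hm0: "m \<noteq> 0"
    and hodd: "odd (v2 m)"
    and hf: "\<And>x. f x = x * x + (z2 (-1) - z2 4 * m) * x"
  defines "p \<equiv> z2 4 * m + z2 2"
  defines "F1 \<equiv> \<lambda>n::nat. zball (p + z2 (2 ^ (n - 2))) (n - 1)"
  defines "G \<equiv> \<lambda>n::nat. zball (z2 (2 ^ (n - 2))) (n - 1)"
  defines "E1 \<equiv> (\<Union>n\<in>{4..}. F1 n)"
  defines "E2 \<equiv> (\<Union>n\<in>{4..v2 m div 2 + 3}. G n)"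
  defines "E3 \<equiv> (\<Union>n\<in>{v2 m div 2 + 3<..}. G n)"
  shows "{x. f x = x} = {0, p}
    \<and> (\<forall>x. res 1 x = 1 \<longrightarrow> res 1 (f x) = 0)
    \<and> {x. res 1 x = 0} = {0, p} \<union> E1 \<union> E2 \<union> E3
    \<and> 0 \<noteq> p
    \<and> disjnt {0, p} E1 \<and> disjnt {0, p} E2 \<and> disjnt {0, p} E3
    \<and> disjnt E1 E2 \<and> disjnt E1 E3 \<and> disjnt E2 E3
    \<and> (\<forall>i\<ge>4. \<forall>j\<ge>4. i \<noteq> j \<longrightarrow> disjnt (F1 i) (F1 j))
    \<and> (\<forall>i\<ge>4. \<forall>j\<ge>4. i \<noteq> j \<longrightarrow> disjnt (G i) (G j))
    \<and> (\<forall>n\<ge>4. typeII f (F1 n) 1)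
    \<and> (\<forall>n. 4 \<le> n \<and> n \<le> v2 m div 2 + 3 \<longrightarrow> typeII f (G n) (2 * n - 5))
    \<and> (\<forall>n. v2 m div 2 + 3 < n \<longrightarrow> typeII f (G n) (v2 m + 1))"
proof -
  interpret z2_quadratic m f by unfold_locales (rule hf)
  have p: "res 2 p = 2" using res_fixed_point[OF res_mod[of 2 m]] by (simp add: p_def mod_simps)
  have G: "G n = zball (0 + z2 (2 ^ (n - 2))) (n - 1)" for n by (simp add: G_def z2_add_0_left)
  have FF: "\<forall>i\<ge>4. \<forall>j\<ge>4. i \<noteq> j \<longrightarrow> disjnt (F1 i) (F1 j)"
    and GG: "\<forall>i\<ge>4. \<forall>j\<ge>4. i \<noteq> j \<longrightarrow> disjnt (G i) (G j)"
    unfolding F1_def G using shells_disjoint by simp_all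
  have "{4..v2 m div 2 + 3} \<union> {v2 m div 2 + 3<..} = {4..}" by auto
  then have E23: "E2 \<union> E3 = (\<Union>n\<in>{4..}. G n)" unfolding E2_def E3_def by blast
  have "disjnt (G i) (G j)" if "i \<in> {4..v2 m div 2 + 3}" "j \<in> {v2 m div 2 + 3<..}" for i j
    using GG that by auto
  then have "disjnt E2 E3" unfolding E2_def E3_def disjnt_iff by blast
  moreover note even_z2_partition[OF p, folded G_def F1_def E1_def E23]
  moreover have "{x. f x = x} = {0, p}" using fixed_point_iff by (auto simp: p_def)
  moreover have "typeII f (F1 n) 1" if "4 \<le> n" for n
    using typeII_near_fixed_point[OF hm0 odd_pos[OF hodd] that] by (simp add: F1_def p_def)
  moreover have "typeII f (G n) (2 * n - 5)" if "4 \<le> n" "n \<le> v2 m div 2 + 3" for n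
  proof -
    have "min (2 * n - 5) (v2 m + 1) = 2 * n - 5" using hodd that by presburger
    with typeII_near_0[OF hm0 hodd \<open>4 \<le> n\<close>] show ?thesis by (simp add: G_def)
  qed
  moreover have "typeII f (G n) (v2 m + 1)" if "v2 m div 2 + 3 < n" for n
  proof -
    have "min (2 * n - 5) (v2 m + 1) = v2 m + 1" "4 \<le> n" using hodd that by presburger+
    with typeII_near_0[OF hm0 hodd \<open>4 \<le> n\<close>] show ?thesis by (simp add: G_def)
  qed
  ultimately show ?thesis using res1_f_of_odd FF GG by (auto simp: disjnt_def)
qed

end
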